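(* Let $k\ge3$ and $q=2^{-1/k}$. Then the code $G_k\cdot G_k$, which encodes $(i,j)\in\mathcal{A}$ as the concatenation $G_k(i)G_k(j)$, is not optimal for $\mathrm{TDGD}(q)$.
   Context: $\mathcal{A}=\{(i,j): i,j\in\mathbb{Z}_{\ge 0}\}$; $\mathrm{TDGD}(q)$ is the distribution $P(i,j)=(1-q)^2q^{i+j}$ on $\mathcal{A}$; optimal means minimal expected codeword length among binary prefix codes for $\mathcal{A}$. For $N\ge1$, the quasi-uniform code $Q_N$ on symbols $0,\dots,N-1$ assigns $2^{\lceil\log_2N\rceil}-N$ codewords of length $\lfloor\log_2 N\rfloor$ to the first (smallest) symbols and codewords of length $\lceil\log_2N\rceil$ to the remaining $2N-2^{\lceil\log_2N\rceil}$ symbols. The Golomb code of order $k$ is $G_k(i)=Q_k(i\bmod k)\cdot u(\lfloor i/k\rfloor)$, where $u(n)$ is $n$ ones followed by a zero. *)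

theory Defs
  imports "HOL-Analysis.Analysis" "HOL-Library.Sublist" "HOL-Library.Extended_Nonnegative_Real"
begin

type_synonym symbol = "nat \<times> nat"
type_synonym codeword = "bool list"

text \<open>Binary prefix code for the alphabet nat x nat: no codeword is a prefix of
  another one (non-strict prefix, hence the code is also injective).\<close>
definition prefix_code :: "(symbol \<Rightarrow> codeword) \<Rightarrow> bool" where
  "prefix_code c \<longleftrightarrow> (\<forall>a b. a \<noteq> b \<longrightarrow> \<not> prefix (c a) (c b))"

definition exp_len :: "(symbol \<Rightarrow> real) \<Rightarrow> (symbol \<Rightarrow> codeword) \<Rightarrow> ennreal" where
  "exp_len P c = (\<Sum>\<^sub>\<infinity>a\<in>UNIV. ennreal (P a * real (length (c a))))"

definition optimal :: "(symbol \<Rightarrow> real) \<Rightarrow> (symbol \<Rightarrow> codeword) \<Rightarrow> bool" where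
  "optimal P c \<longleftrightarrow> prefix_code c \<and>
     (\<forall>c'. prefix_code c' \<longrightarrow> exp_len P c \<le> exp_len P c')"

definition TDGD :: "real \<Rightarrow> symbol \<Rightarrow> real" where
  "TDGD q = (\<lambda>(i, j). (1 - q)^2 * q ^ (i + j))"

fun bin :: "nat \<Rightarrow> nat \<Rightarrow> codeword" where
  "bin 0 v = []"
| "bin (Suc n) v = (odd (v div 2 ^ n)) # bin n v"

definition flog2 :: "nat \<Rightarrow> nat" where "flog2 N = nat \<lfloor>log 2 (real N)\<rfloor>"
definition clog2 :: "nat \<Rightarrow> nat" where "clog2 N = nat \<lceil>log 2 (real N)\<rceil>"

text \<open>Quasi-uniform (truncated binary) code on 0..N-1: the first 2^ceil(log N) - N
  symbols get floor(log N)-bit codewords, the remaining ones ceil(log N)-bit codewords.\<close>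
definition QU :: "nat \<Rightarrow> nat \<Rightarrow> codeword" where
  "QU N i = (let u = 2 ^ clog2 N - N in
             if i < u then bin (flog2 N) i else bin (clog2 N) (i + u))"

definition unary :: "nat \<Rightarrow> codeword" where
  "unary n = replicate n True @ [False]"

definition golomb :: "nat \<Rightarrow> nat \<Rightarrow> codeword" where
  "golomb k i = QU k (i mod k) @ unary (i div k)"

definition golomb_pair :: "nat \<Rightarrow> symbol \<Rightarrow> codeword" where
  "golomb_pair k = (\<lambda>(i, j). golomb k i @ golomb k j)"

end

theory Submission
  imports Defs
begin

(* G_k is not optimal for TDGD(q) because it violates the classical
   monotonicity property of optimal codes: a more probable symbol never gets a strictly
   longer codeword.  Indeed, if P(a) > P(b) but |c(a)| > |c(b)|, exchanging the codewords
   of a and b keeps the prefix property and strictly lowers the (finite) expected length. *)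

lemma length_bin [simp]: "length (bin n v) = n"
  by (induction n) auto

lemma length_QU: "length (QU N i) = (if i < 2 ^ clog2 N - N then flog2 N else clog2 N)"
  by (simp add: QU_def Let_def)

lemma length_golomb:
  "length (golomb k i) = (if i mod k < 2 ^ clog2 k - k then flog2 k else clog2 k) + i div k + 1"
  by (simp add: golomb_def unary_def length_QU)

lemma length_golomb_pair:
  "length (golomb_pair k (i, j)) = length (golomb k i) + length (golomb k j)"
  by (simp add: golomb_pair_def)

lemma pow_flog2_le: assumes "N \<ge> 1" shows "2 ^ flog2 N \<le> N"
proof -
  have "real (2 ^ flog2 N) = 2 powr real_of_int \<lfloor>log 2 (real N)\<rfloor>"
    using assms by (simp add: flog2_def powr_realpow[symmetric])
  also have "\<dots> \<le> 2 powr (log 2 (real N))" by simp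
  also have "\<dots> = real N" using assms by simp
  finally show ?thesis by linarith
qed

lemma pow_clog2_bounds: assumes "N \<ge> 1" shows "N \<le> 2 ^ clog2 N" and "2 ^ clog2 N < 2 * N"
proof -
  have pow: "real (2 ^ clog2 N) = 2 powr real_of_int \<lceil>log 2 (real N)\<rceil>"
    using assms by (simp add: clog2_def powr_realpow[symmetric])
  have "real N = 2 powr (log 2 (real N))" using assms by simp
  also have "\<dots> \<le> 2 powr real_of_int \<lceil>log 2 (real N)\<rceil>" by simp
  finally show "N \<le> 2 ^ clog2 N" using pow by linarith
  have "2 powr real_of_int \<lceil>log 2 (real N)\<rceil> < 2 powr (log 2 (real N) + 1)"
    by (intro powr_less_mono) linarith+
  also have "\<dots> = 2 * real N" using assms by (simp add: powr_add)
  finally show "2 ^ clog2 N < 2 * N" using pow by linarith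
qed

text \<open>A crude linear bound, enough to make the expected length finite.\<close>

lemma length_golomb_le: assumes "k \<ge> 1" shows "length (golomb k i) \<le> 2 * k + 1 + i"
proof -
  have "flog2 k < 2 * k"
    using pow_flog2_le[OF assms] less_exp[of "flog2 k"] by linarith
  moreover have "clog2 k < 2 * k"
    using pow_clog2_bounds(2)[OF assms] less_exp[of "clog2 k"] by linarith
  ultimately have "(if i mod k < 2 ^ clog2 k - k then flog2 k else clog2 k) \<le> 2 * k"
    by simp
  moreover have "i div k \<le> i" by simp
  ultimately show ?thesis unfolding length_golomb by linarith
qed

text \<open>Write \<open>f = flog2 k\<close>, \<open>c = clog2 k\<close> and \<open>u = 2^c - k\<close>, so that
  \<open>|G_k(i)| = (f if i mod k < u else c) + i div k + 1\<close>.  If \<open>u = 0\<close> the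
  pair \<open>(0, k)\<close> (length \<open>2c + 3\<close>) loses against \<open>(2, k - 1)\<close>
  (length \<open>2c + 2\<close>); if \<open>u > 0\<close> then \<open>f < c\<close> and \<open>(u, u)\<close>
  (length \<open>2c + 2\<close>) loses against \<open>(u - 1, u + 2)\<close> (length at most
  \<open>f + c + 2\<close>).\<close>

lemma golomb_pair_not_monotone:
  assumes k: "k \<ge> 3"
  shows "\<exists>i j i' j'. i + j < i' + j' \<and>
           length (golomb_pair k (i', j')) < length (golomb_pair k (i, j))"
proof -
  define f c u where "f = flog2 k" and "c = clog2 k" and "u = 2 ^ clog2 k - k"
  have len: "length (golomb k i) = (if i mod k < u then f else c) + i div k + 1" for i
    by (simp add: length_golomb f_def c_def u_def)
  have "u < k" using pow_clog2_bounds(2)[of k] k by (simp add: u_def)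
  show ?thesis
  proof (cases "u = 0")
    case True
    have "length (golomb_pair k (2, k - 1)) < length (golomb_pair k (0, k))"
      using k True by (simp add: length_golomb_pair len)
    moreover have "0 + k < 2 + (k - 1)" using k by simp
    ultimately show ?thesis by blast
  next
    case False
    have "(2::nat) ^ f < 2 ^ c"
      using False pow_flog2_le[of k] k unfolding f_def c_def u_def by linarith
    hence "f < c" by simp
    have "length (golomb k (u + 2)) \<le> c + 1"
    proof (cases "u + 2 < k")
      case True
      thus ?thesis by (simp add: len)
    next
      case False
      have "(1 + k) mod k = 1" using k by (subst mod_add_self2) simp
      moreover have "(1 + k) div k = 1" using k by (subst div_add_self2) auto
      moreover have "u + 2 = k \<or> u + 2 = 1 + k" using False \<open>u < k\<close> by linarith
      ultimately show ?thesis using \<open>f < c\<close> \<open>u \<noteq> 0\<close> k by (auto simp: len)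
    qed
    hence "length (golomb_pair k (u - 1, u + 2)) < length (golomb_pair k (u, u))"
      using \<open>u < k\<close> \<open>u \<noteq> 0\<close> \<open>f < c\<close> by (simp add: length_golomb_pair len)
    moreover have "u + u < (u - 1) + (u + 2)" using False by simp
    ultimately show ?thesis by blast
  qed
qed

text \<open>If a more probable symbol \<open>a\<close> has a strictly longer codeword than \<open>b\<close>,
  swapping the two codewords yields a prefix code of strictly smaller expected length;
  finiteness of the expected length is needed to cancel the unchanged part of the sum.\<close>

lemma exchange_improves:
  fixes P :: "symbol \<Rightarrow> real" and c :: "symbol \<Rightarrow> codeword"
  assumes fin: "exp_len P c \<noteq> \<infinity>" and "a \<noteq> b" and P: "P b < P a" "0 \<le> P b"
    and len: "length (c b) < length (c a)"
  shows "\<not> optimal P c"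
proof
  assume opt: "optimal P c"
  define \<sigma> where "\<sigma> x = (if x = a then b else if x = b then a else x)" for x
  define c' where "c' = c \<circ> \<sigma>"
  have "prefix_code c" using opt by (simp add: optimal_def)
  moreover have "\<sigma> x \<noteq> \<sigma> y" if "x \<noteq> y" for x y using that \<open>a \<noteq> b\<close> by (auto simp: \<sigma>_def)
  ultimately have "prefix_code c'" unfolding prefix_code_def c'_def comp_def by blast
  define F where "F d x = ennreal (P x * real (length (d x)))" for d :: "symbol \<Rightarrow> codeword" and x
  define R where "R = UNIV - {a, b}"
  have decompose: "exp_len P d = infsum (F d) R + (F d a + F d b)" for d
  proof -
    have "(UNIV :: symbol set) = insert a (insert b R)" by (auto simp: R_def)
    hence "exp_len P d = infsum (F d) (insert a (insert b R))"
      unfolding exp_len_def F_def by simp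
    also have "\<dots> = F d a + (F d b + infsum (F d) R)"
      using \<open>a \<noteq> b\<close> by (simp add: infsum_insert R_def nonneg_summable_on_complete)
    finally show ?thesis by (simp add: ac_simps)
  qed
  have same_rest: "infsum (F c') R = infsum (F c) R"
    by (rule infsum_cong) (auto simp: R_def F_def c'_def \<sigma>_def)
  have "P a * real (length (c b)) + P b * real (length (c a)) <
        P a * real (length (c a)) + P b * real (length (c b))"
  proof -
    have "0 < (P a - P b) * (real (length (c a)) - real (length (c b)))"
      using P len by (intro mult_pos_pos) auto
    thus ?thesis by (simp add: algebra_simps)
  qed
  hence swapped: "F c' a + F c' b < F c a + F c b"
    using P \<open>a \<noteq> b\<close> by (simp add: F_def c'_def \<sigma>_def ennreal_plus[symmetric] ennreal_less_iff
        del: ennreal_plus)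
  have "infsum (F c) R \<noteq> \<infinity>" using fin decompose[of c] by (auto simp: top_unique)
  hence "exp_len P c' < exp_len P c"
    using decompose[of c] decompose[of c'] same_rest swapped by (simp add: ennreal_add_left_cancel_less)
  with opt \<open>prefix_code c'\<close> show False by (auto simp: optimal_def not_le[symmetric])
qed

lemma summable_on_product_nonneg:
  fixes f :: "'a \<Rightarrow> real" and g :: "'b \<Rightarrow> real"
  assumes "f summable_on A" and "g summable_on B"
    and "\<And>x. x \<in> A \<Longrightarrow> 0 \<le> f x" and "\<And>y. y \<in> B \<Longrightarrow> 0 \<le> g y"
  shows "(\<lambda>(x, y). f x * g y) summable_on A \<times> B"
proof (rule summable_on_SigmaI)
  show "((\<lambda>y. case (x, y) of (x, y) \<Rightarrow> f x * g y) has_sum f x * infsum g B) B" for x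
    using has_sum_cmult_right[OF has_sum_infsum[OF assms(2)]] by simp
  show "(\<lambda>x. f x * infsum g B) summable_on A"
    using assms(1) by (rule summable_on_cmult_left)
qed (use assms in auto)

lemma exp_len_finite_if_dominated:
  fixes g :: "symbol \<Rightarrow> real"
  assumes "g summable_on UNIV" and "\<And>x. 0 \<le> g x"
    and "\<And>x. P x * real (length (c x)) \<le> g x"
  shows "exp_len P c \<noteq> \<infinity>"
proof -
  have "exp_len P c \<le> infsum (ennreal \<circ> g) UNIV"
    unfolding exp_len_def using assms(3)
    by (intro infsum_mono nonneg_summable_on_complete) (auto intro: ennreal_leI)
  also have "\<dots> = ennreal (infsum g UNIV)"
    using assms(1,2)
    by (intro infsum_comm_additive_general) (auto simp: sum_ennreal intro!: continuous_intros)
  finally show ?thesis by (auto simp: top_unique)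
qed

lemma exp_len_golomb_pair_finite:
  assumes q: "0 < q" "q < 1" and k: "k \<ge> 1"
  shows "exp_len (TDGD q) (golomb_pair k) \<noteq> \<infinity>"
proof -
  define h where "h n = real (Suc n) * q ^ n" for n
  define C where "C = (1 - q)^2 * (2 * real (2 * k + 1))"
  have "(h has_sum 1 / (1 - q)^2) UNIV"
    unfolding h_def using q by (intro sums_nonneg_imp_has_sum geometric_deriv_sums) auto
  hence h_summable: "h summable_on UNIV" by (rule has_sum_imp_summable)
  have h_nonneg: "0 \<le> h n" for n using q by (simp add: h_def)
  have "(\<lambda>(i, j). h i * h j) summable_on UNIV \<times> UNIV"
    using h_summable h_nonneg by (intro summable_on_product_nonneg) auto
  hence "(\<lambda>(i, j). C * (h i * h j)) summable_on UNIV"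
    by (simp add: summable_on_cmult_right case_prod_unfold)
  moreover have "TDGD q (i, j) * real (length (golomb_pair k (i, j))) \<le> C * (h i * h j)" for i j
  proof -
    have linear: "length (golomb k n) \<le> (2 * k + 1) * Suc n" for n
      using length_golomb_le[OF k, of n] by (simp add: algebra_simps)
    have "length (golomb_pair k (i, j)) \<le> (2 * k + 1) * (Suc i + Suc j)"
      using linear[of i] linear[of j] by (simp add: length_golomb_pair add_mult_distrib2)
    also have "\<dots> \<le> (2 * k + 1) * (2 * (Suc i * Suc j))"
      by (intro mult_left_mono) auto
    finally have "real (length (golomb_pair k (i, j))) \<le>
                  real ((2 * k + 1) * (2 * (Suc i * Suc j)))"
      by (rule of_nat_mono)
    hence "real (length (golomb_pair k (i, j))) \<le>
           2 * real (2 * k + 1) * (real (Suc i) * real (Suc j))"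
      by (simp add: algebra_simps)
    hence "(1 - q)^2 * q ^ (i + j) * real (length (golomb_pair k (i, j))) \<le>
           (1 - q)^2 * q ^ (i + j) * (2 * real (2 * k + 1) * (real (Suc i) * real (Suc j)))"
      using q by (intro mult_left_mono) auto
    thus ?thesis by (simp add: TDGD_def C_def h_def power_add algebra_simps)
  qed
  ultimately show ?thesis
    using h_nonneg q
    by (intro exp_len_finite_if_dominated[where g = "\<lambda>(i, j). C * (h i * h j)"])
       (auto simp: C_def)
qed

lemma TDGD_strict_anti:
  assumes "0 < q" "q < 1" and "i + j < i' + j'"
  shows "TDGD q (i', j') < TDGD q (i, j)"
proof -
  have "q ^ (i' + j') < q ^ (i + j)" using assms by (intro power_strict_decreasing) auto
  thus ?thesis using assms(2) by (simp add: TDGD_def)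
qed

theorem golomb_pair_not_optimal:
  assumes "0 < q" "q < 1" and "k \<ge> 3"
  shows "\<not> optimal (TDGD q) (golomb_pair k)"
proof -
  obtain i j i' j' where sums: "i + j < i' + j'"
    and lens: "length (golomb_pair k (i', j')) < length (golomb_pair k (i, j))"
    using golomb_pair_not_monotone[OF assms(3)] by blast
  show ?thesis
  proof (rule exchange_improves)
    show "exp_len (TDGD q) (golomb_pair k) \<noteq> \<infinity>"
      using exp_len_golomb_pair_finite assms by simp
    show "TDGD q (i', j') < TDGD q (i, j)" using TDGD_strict_anti assms sums by blast
    show "0 \<le> TDGD q (i', j')" using assms by (simp add: TDGD_def)
  qed (use sums lens in auto)
qed

theorem corollary1:
  fixes k :: nat and q :: real
  assumes "k \<ge> 3"
    and "q = 2 powr (- 1 / real k)"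
  shows "\<not> optimal (TDGD q) (golomb_pair k)"
proof (rule golomb_pair_not_optimal)
  show "0 < q" "q < 1" using assms by (simp_all add: powr_less_one)
qed (use assms in simp)

end
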